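(* Let $d,K,n$ be positive integers with $K\ge 2$. For $\tau>0$ let $$F_\tau(\mathbf W,\mathbf H)=\frac{1}{nK}\sum_{k=1}^{K}\sum_{i=1}^{n}\mathcal L_{\mathrm{CE}}(\mathbf W^\top \mathbf h_{k,i},\mathbf y_k,\tau),$$ and let $\mathcal S_\tau=\operatorname{argmin}\{F_\tau(\mathbf W,\mathbf H):\mathbf W\in\mathrm{OB}(d,K),\ \mathbf H\in \mathrm{OB}(d,nK)\}$. Then $$\limsup_{\tau\to 0}\mathcal S_\tau\ \subseteq\ \operatorname{argmin}_{\mathbf W\in\mathrm{OB}(d,K),\ \mathbf H\in\mathrm{OB}(d,nK)}\mathcal L_{\mathrm{HardMax}}(\mathbf W,\mathbf H).$$
   Context: $\mathrm{OB}(d,m)$ denotes the set of real $d\times m$ matrices all of whose columns have unit Euclidean norm. A matrix $\mathbf W\in\mathrm{OB}(d,K)$ has columns $\mathbf w_1,\dots,\mathbf w_K$; a matrix $\mathbf H\in\mathrm{OB}(d,nK)$ has columns indexed as $\mathbf h_{k,i}$, $k\in[K]$, $i\in[n]$. $\mathbf y_k\in\mathbb R^K$ is the $k$-th standard basis vector. For $\mathbf z\in\mathbb R^K$, $\mathcal L_{\mathrm{CE}}(\mathbf z,\mathbf y_k,\tau)=-\log\big(\exp(z_k/\tau)/\sum_{j=1}^K\exp(z_j/\tau)\big)$. The HardMax loss is $\mathcal L_{\mathrm{HardMax}}(\mathbf W,\mathbf H)=\max_{k\in[K]}\max_{i\in[n]}\max_{k'\ne k}\langle \mathbf w_{k'}-\mathbf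 w_k,\mathbf h_{k,i}\rangle$. The $\limsup$ of sets as $\tau\to0$ is the (Painlevé–Kuratowski) outer limit: the set of all limit points of sequences $x_j\in\mathcal S_{\tau_j}$ with $\tau_j\to 0$. *)

theory Defs
  imports "HOL-Analysis.Analysis"
begin

text \<open>Dimension d is the finite type 'd (vectors in real ^ 'd); the K classes are the
finite type 'k and the n samples per class are the finite type 'n.
W is given by its columns w_k = W k; H by its columns h_{k,i} = H k i.\<close>

definition OB :: "('a \<Rightarrow> real ^ 'd) set" where
  "OB = {W. \<forall>k. norm (W k) = 1}"

definition CE :: "('k::finite \<Rightarrow> real) \<Rightarrow> 'k \<Rightarrow> real \<Rightarrow> real" where
  "CE z k \<tau> = - ln (exp (z k / \<tau>) / (\<Sum>j\<in>UNIV. exp (z j / \<tau>)))"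

definition F_tau :: "real \<Rightarrow> ('k::finite \<Rightarrow> real ^ 'd) \<Rightarrow> ('k \<Rightarrow> 'n::finite \<Rightarrow> real ^ 'd) \<Rightarrow> real" where
  "F_tau \<tau> W H = (1 / (real CARD('n) * real CARD('k))) *
     (\<Sum>k\<in>UNIV. \<Sum>i\<in>UNIV. CE (\<lambda>j. W j \<bullet> H k i) k \<tau>)"

definition S_tau :: "real \<Rightarrow> (('k::finite \<Rightarrow> real ^ 'd) \<times> ('k \<Rightarrow> 'n::finite \<Rightarrow> real ^ 'd)) set" where
  "S_tau \<tau> = {(W, H). W \<in> OB \<and> (\<forall>k. H k \<in> OB) \<and>
      (\<forall>(W' :: 'k \<Rightarrow> real ^ 'd) (H' :: 'k \<Rightarrow> 'n \<Rightarrow> real ^ 'd). W' \<in> OB \<and> (\<forall>k. H' k \<in> OB) \<longrightarrow> F_tau \<tau> W H \<le> F_tau \<tau> W' H')}"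

definition HardMax :: "('k::finite \<Rightarrow> real ^ 'd) \<Rightarrow> ('k \<Rightarrow> 'n::finite \<Rightarrow> real ^ 'd) \<Rightarrow> real" where
  "HardMax W H = Max {(W k' - W k) \<bullet> H k i | k i k'. k' \<noteq> k}"

definition HardMax_argmin :: "(('k::finite \<Rightarrow> real ^ 'd) \<times> ('k \<Rightarrow> 'n::finite \<Rightarrow> real ^ 'd)) set" where
  "HardMax_argmin = {(W, H). W \<in> OB \<and> (\<forall>k. H k \<in> OB) \<and>
      (\<forall>(W' :: 'k \<Rightarrow> real ^ 'd) (H' :: 'k \<Rightarrow> 'n \<Rightarrow> real ^ 'd). W' \<in> OB \<and> (\<forall>k. H' k \<in> OB) \<longrightarrow> HardMax W H \<le> HardMax W' H')}"

text \<open>Painleve-Kuratowski outer limit as tau tends to 0 (from above).\<close>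
definition outer_limit_0 :: "(real \<Rightarrow> 'a::topological_space set) \<Rightarrow> 'a set" where
  "outer_limit_0 S = {x. \<exists>t xs. (\<forall>j. t j > 0) \<and> t \<longlonglongrightarrow> 0 \<and>
      (\<forall>j. xs j \<in> S (t j)) \<and> xs \<longlonglongrightarrow> x}"

end

theory Submission
  imports Defs "HOL-Real_Asymp.Real_Asymp"
begin

text \<open>
  Write \<open>m = \<langle>w\<^sub>k\<^sub>' - w\<^sub>k, h\<^sub>k\<^sub>,\<^sub>i\<rangle>\<close> for the margins. The cross-entropy
  \<open>F\<^sub>\<tau>\<close> is at least \<open>ln (1 + exp (m / \<tau>)) / (nK)\<close> for every single margin
  \<open>m\<close>, and at most \<open>ln (1 + (K - 1) exp (M / \<tau>))\<close> if all margins are at most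
  \<open>M\<close>. For \<open>M \<le> 0\<close> and \<open>m > M\<close> the lower bound eventually exceeds the upper
  one as \<open>\<tau> \<rightarrow> 0\<close>, whatever the factor \<open>1 / (nK)\<close>. Hence every margin of a
  limit of minimisers is bounded by \<open>M\<close> whenever some feasible competitor has all
  margins at most \<open>M \<le> 0\<close>. With the competitor whose columns all coincide
  (all margins 0) this bounds the HardMax loss of the limit by \<open>0\<close>, and with an
  arbitrary competitor of nonpositive HardMax loss by that loss.
\<close>

lemma CE_eq_ln_one_plus:
  "CE z k t = ln (1 + (\<Sum>j\<in>UNIV - {k}. exp ((z j - z k) / t)))"
proof -
  define S where "S = (\<Sum>j\<in>UNIV. exp (z j / t))"
  have "S > 0"
    unfolding S_def by (intro sum_pos) auto
  then have "CE z k t = ln (S / exp (z k / t))"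
    unfolding CE_def S_def by (simp add: ln_div)
  also have "S / exp (z k / t) = (\<Sum>j\<in>UNIV. exp ((z j - z k) / t))"
    unfolding S_def sum_divide_distrib by (simp add: exp_diff diff_divide_distrib)
  also have "\<dots> = 1 + (\<Sum>j\<in>UNIV - {k}. exp ((z j - z k) / t))"
    by (subst sum.remove[of UNIV k]) auto
  finally show ?thesis .
qed

lemma CE_nonneg: "0 \<le> CE z k t"
  unfolding CE_eq_ln_one_plus by (simp add: sum_nonneg)

lemma CE_ge_margin:
  assumes "k' \<noteq> k"
  shows "ln (1 + exp ((z k' - z k) / t)) \<le> CE z k t"
proof -
  have "exp ((z k' - z k) / t) \<le> (\<Sum>j\<in>UNIV - {k}. exp ((z j - z k) / t))"
    using assms by (intro member_le_sum) auto
  then show ?thesis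
    unfolding CE_eq_ln_one_plus by (intro ln_mono) (auto intro: add_pos_pos)
qed

lemma CE_le_max_margin:
  fixes z :: "'k::finite \<Rightarrow> real"
  assumes "t > 0" and "\<And>j. j \<noteq> k \<Longrightarrow> z j - z k \<le> M"
  shows "CE z k t \<le> ln (1 + (real CARD('k) - 1) * exp (M / t))"
proof -
  have "(\<Sum>j\<in>UNIV - {k}. exp ((z j - z k) / t)) \<le> (\<Sum>j\<in>UNIV - {k}. exp (M / t))"
    using assms by (intro sum_mono) (auto simp: divide_right_mono)
  also have "\<dots> = (real CARD('k) - 1) * exp (M / t)"
    by (simp add: card_Diff_singleton of_nat_diff Suc_leI)
  finally show ?thesis
    unfolding CE_eq_ln_one_plus by (simp add: sum_nonneg add_pos_nonneg)
qed

lemma F_tau_ge_margin: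
  fixes W :: "'k::finite \<Rightarrow> real ^ 'd" and H :: "'k \<Rightarrow> 'n::finite \<Rightarrow> real ^ 'd"
  assumes "k' \<noteq> k" and "t > 0" and "N \<le> (W k' - W k) \<bullet> H k i"
  shows "ln (1 + exp (N / t)) / (real CARD('n) * real CARD('k)) \<le> F_tau t W H"
proof -
  have "ln (1 + exp (N / t)) \<le> ln (1 + exp (((W k' - W k) \<bullet> H k i) / t))"
    using assms(2,3) by (simp add: add_pos_pos divide_right_mono)
  also have "\<dots> \<le> CE (\<lambda>j. W j \<bullet> H k i) k t"
    using CE_ge_margin[OF assms(1)] by (simp add: inner_diff_left)
  also have "\<dots> \<le> (\<Sum>i\<in>UNIV. CE (\<lambda>j. W j \<bullet> H k i) k t)"
    by (rule member_le_sum) (auto simp: CE_nonneg)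
  also have "\<dots> \<le> (\<Sum>k\<in>UNIV. \<Sum>i\<in>UNIV. CE (\<lambda>j. W j \<bullet> H k i) k t)"
    by (rule member_le_sum) (auto simp: CE_nonneg sum_nonneg)
  finally show ?thesis
    unfolding F_tau_def by (simp add: divide_right_mono)
qed

lemma F_tau_le_max_margin:
  fixes W :: "'k::finite \<Rightarrow> real ^ 'd" and H :: "'k \<Rightarrow> 'n::finite \<Rightarrow> real ^ 'd"
  assumes "t > 0" and "\<forall>k i k'. k' \<noteq> k \<longrightarrow> (W k' - W k) \<bullet> H k i \<le> M"
  shows "F_tau t W H \<le> ln (1 + (real CARD('k) - 1) * exp (M / t))"
proof -
  define B where "B = ln (1 + (real CARD('k) - 1) * exp (M / t))"
  have "(\<Sum>k\<in>UNIV. \<Sum>i\<in>UNIV. CE (\<lambda>j. W j \<bullet> H k i) k t)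
          \<le> (\<Sum>k\<in>(UNIV :: 'k set). \<Sum>i\<in>(UNIV :: 'n set). B)"
    unfolding B_def by (intro sum_mono CE_le_max_margin) (use assms in \<open>auto simp: inner_diff_left\<close>)
  then show ?thesis
    unfolding F_tau_def B_def by (simp add: field_simps)
qed

lemma ln_one_plus_mult_ge:
  fixes u R :: real
  assumes "0 \<le> u" "u \<le> 1" "0 \<le> R"
  shows "u * ln (1 + R) \<le> ln (1 + u * R)"
  using concave_onD[OF ln_concave, of u 1 "1 + R"] assms by (simp add: algebra_simps)

text \<open>
  Writing \<open>exp (N / t) = u R\<close> with \<open>u = exp (M / t) \<le> 1\<close> and
  \<open>R = exp ((N - M) / t) \<rightarrow> \<infinity>\<close>, concavity gives
  \<open>ln (1 + L u) \<le> L u < c u ln (1 + R) \<le> c ln (1 + u R)\<close>.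
\<close>
lemma eventually_ln_one_plus_exp_less:
  fixes c L M N :: real
  assumes "c > 0" "L \<ge> 0" "M \<le> 0" "M < N"
  shows "eventually (\<lambda>t. ln (1 + L * exp (M / t)) < c * ln (1 + exp (N / t))) (at_right 0)"
proof -
  have "eventually (\<lambda>t. L < c * ln (1 + exp ((N - M) / t))) (at_right 0)"
    using assms by real_asymp
  moreover have "eventually (\<lambda>t. t > 0) (at_right (0::real))"
    by (simp add: eventually_at_right_less)
  ultimately show ?thesis
  proof eventually_elim
    case (elim t)
    define u where "u = exp (M / t)"
    define R where "R = exp ((N - M) / t)"
    have u: "0 < u" "u \<le> 1"
      unfolding u_def using assms elim by (auto simp: divide_nonpos_pos)
    have "ln (1 + L * u) \<le> L * u"
      using assms u by (intro ln_add_one_self_le_self) simp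
    also have "\<dots> < c * (u * ln (1 + R))"
      using elim u unfolding R_def by simp
    also have "\<dots> \<le> c * ln (1 + u * R)"
      using ln_one_plus_mult_ge[of u R] u assms unfolding R_def by (intro mult_left_mono) auto
    also have "u * R = exp (N / t)"
      unfolding u_def R_def by (simp flip: exp_add add: diff_divide_distrib)
    finally show ?case
      unfolding u_def .
  qed
qed

lemma closed_OB: "closed (OB :: ('a \<Rightarrow> real ^ 'd) set)"
  unfolding OB_def
  by (intro closed_Collect_all closed_Collect_eq continuous_on_norm continuous_on_product_coordinates)
    simp

lemma closed_columnwise_OB: "closed {H :: 'a \<Rightarrow> 'b \<Rightarrow> real ^ 'd. \<forall>k. H k \<in> OB}"
proof -
  have "continuous_on UNIV (\<lambda>H :: 'a \<Rightarrow> 'b \<Rightarrow> real ^ 'd. H k i)" for k i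
    by (rule continuous_on_product_then_coordinatewise[OF continuous_on_product_coordinates])
  then show ?thesis
    unfolding OB_def mem_Collect_eq
    by (intro closed_Collect_all closed_Collect_eq continuous_on_norm) simp_all
qed

lemma outer_limit_0_subset_closed:
  assumes "\<And>t. t > 0 \<Longrightarrow> S t \<subseteq> C" and "closed C"
  shows "outer_limit_0 S \<subseteq> C"
proof
  fix x assume "x \<in> outer_limit_0 S"
  then obtain t xs where "\<forall>j. t j > 0" "\<forall>j. xs j \<in> S (t j)" "xs \<longlonglongrightarrow> x"
    unfolding outer_limit_0_def by blast
  with assms show "x \<in> C"
    by (intro Lim_in_closed_set[of C xs sequentially]) (auto intro!: always_eventually)
qed

lemma outer_limit_0_S_tau_feasible:
  "outer_limit_0 S_tau \<subseteq> OB \<times> {H :: 'k::finite \<Rightarrow> 'n::finite \<Rightarrow> real ^ 'd. \<forall>k. H k \<in> OB}"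
  by (intro outer_limit_0_subset_closed closed_Times closed_OB closed_columnwise_OB)
    (auto simp: S_tau_def)

lemma tendsto_fun_apply:
  "(f \<longlongrightarrow> l) F \<Longrightarrow> ((\<lambda>x. f x i) \<longlongrightarrow> (l i :: 'b::topological_space)) F"
  using continuous_on_tendsto_compose[OF continuous_on_product_coordinates, of f l F i]
  by (simp add: o_def)

lemma outer_limit_0_S_tau_margin_le:
  fixes W W' :: "'k::finite \<Rightarrow> real ^ 'd" and H H' :: "'k \<Rightarrow> 'n::finite \<Rightarrow> real ^ 'd"
  assumes lim: "(W, H) \<in> outer_limit_0 S_tau"
    and feasible: "W' \<in> OB" "\<forall>k. H' k \<in> OB"
    and M: "M \<le> 0" "\<forall>k i k'. k' \<noteq> k \<longrightarrow> (W' k' - W' k) \<bullet> H' k i \<le> M"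
    and "k' \<noteq> k"
  shows "(W k' - W k) \<bullet> H k i \<le> M"
proof (rule ccontr)
  define margin where "margin x = (fst x k' - fst x k) \<bullet> snd x k i"
    for x :: "('k \<Rightarrow> real ^ 'd) \<times> ('k \<Rightarrow> 'n \<Rightarrow> real ^ 'd)"
  assume "\<not> (W k' - W k) \<bullet> H k i \<le> M"
  then have "M < margin (W, H)"
    unfolding margin_def by simp
  then obtain N where N: "M < N" "N < margin (W, H)"
    using dense by blast
  from lim obtain t xs where t: "\<forall>j. t j > 0" "t \<longlonglongrightarrow> 0"
    and xs: "\<forall>j. xs j \<in> S_tau (t j)" "xs \<longlonglongrightarrow> (W, H)"
    unfolding outer_limit_0_def by blast
  have W_lim: "(\<lambda>j. fst (xs j)) \<longlonglongrightarrow> W" and H_lim: "(\<lambda>j. snd (xs j)) \<longlonglongrightarrow> H"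
    using tendsto_fst[OF xs(2)] tendsto_snd[OF xs(2)] by simp_all
  have "(\<lambda>j. margin (xs j)) \<longlonglongrightarrow> margin (W, H)"
    using tendsto_fun_apply[OF W_lim] tendsto_fun_apply[OF tendsto_fun_apply[OF H_lim]]
    unfolding margin_def by (auto intro!: tendsto_inner tendsto_diff)
  then have ev_margin: "eventually (\<lambda>j. N < margin (xs j)) sequentially"
    using N(2) by (rule order_tendstoD)
  define c where "c = 1 / (real CARD('n) * real CARD('k))"
  define L where "L = real CARD('k) - 1"
  have "filterlim t (at_right 0) sequentially"
    unfolding filterlim_at using t by (auto intro!: always_eventually simp: dual_order.strict_implies_not_eq)
  moreover have "eventually (\<lambda>\<tau>. ln (1 + L * exp (M / \<tau>)) < c * ln (1 + exp (N / \<tau>))) (at_right 0)"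
    unfolding c_def L_def using M(1) N(1) by (intro eventually_ln_one_plus_exp_less) (auto simp: Suc_leI)
  ultimately have ev_asymp:
    "eventually (\<lambda>j. ln (1 + L * exp (M / t j)) < c * ln (1 + exp (N / t j))) sequentially"
    by (rule filterlim_iff[THEN iffD1, rule_format])
  have "eventually (\<lambda>j. False) sequentially"
    using ev_margin ev_asymp
  proof eventually_elim
    case (elim j)
    obtain Wj Hj where xj: "xs j = (Wj, Hj)"
      by fastforce
    have "c * ln (1 + exp (N / t j)) \<le> F_tau (t j) Wj Hj"
      unfolding c_def using F_tau_ge_margin[OF \<open>k' \<noteq> k\<close>, of "t j" N Wj Hj i] t elim
      by (simp add: xj margin_def)
    also have "\<dots> \<le> F_tau (t j) W' H'"
      using xs(1) feasible unfolding S_tau_def by (auto simp: xj dest!: spec[of _ j])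
    also have "\<dots> \<le> ln (1 + L * exp (M / t j))"
      unfolding L_def using t M(2) by (intro F_tau_le_max_margin) auto
    finally show ?case
      using elim by simp
  qed
  then show False
    by simp
qed

lemma finite_margins:
  fixes W :: "'k::finite \<Rightarrow> real ^ 'd" and H :: "'k \<Rightarrow> 'n::finite \<Rightarrow> real ^ 'd"
  shows "finite {(W k' - W k) \<bullet> H k i | k i k'. k' \<noteq> k}"
proof -
  have "{(W k' - W k) \<bullet> H k i | k i k'. k' \<noteq> k} \<subseteq> range (\<lambda>(k, i, k'). (W k' - W k) \<bullet> H k i)"
    by (auto simp: image_iff) blast
  then show ?thesis
    by (rule finite_subset) simp
qed

lemma margin_le_HardMax:
  fixes W :: "'k::finite \<Rightarrow> real ^ 'd" and H :: "'k \<Rightarrow> 'n::finite \<Rightarrow> real ^ 'd"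
  assumes "k' \<noteq> k"
  shows "(W k' - W k) \<bullet> H k i \<le> HardMax W H"
  unfolding HardMax_def using assms by (intro Max_ge finite_margins) blast

lemma HardMax_le_iff:
  fixes W :: "'k::finite \<Rightarrow> real ^ 'd" and H :: "'k \<Rightarrow> 'n::finite \<Rightarrow> real ^ 'd"
  assumes "CARD('k) \<ge> 2"
  shows "HardMax W H \<le> M \<longleftrightarrow> (\<forall>k i k'. k' \<noteq> k \<longrightarrow> (W k' - W k) \<bullet> H k i \<le> M)"
proof -
  obtain k k' :: 'k where "k' \<noteq> k"
    using assms card_le_Suc0_iff_eq[of "UNIV :: 'k set"] by auto
  then have "{(W k' - W k) \<bullet> H k i | k i k'. k' \<noteq> k} \<noteq> {}"
    by blast
  then show ?thesis
    unfolding HardMax_def by (auto simp: Max_le_iff[OF finite_margins])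
qed

lemma outer_limit_0_S_tau_margin_nonpos:
  fixes W :: "'k::finite \<Rightarrow> real ^ 'd" and H :: "'k \<Rightarrow> 'n::finite \<Rightarrow> real ^ 'd"
  assumes "(W, H) \<in> outer_limit_0 S_tau" and "k' \<noteq> k"
  shows "(W k' - W k) \<bullet> H k i \<le> 0"
proof -
  obtain u :: "real ^ 'd" where "norm u = 1"
    using vector_choose_size zero_le_one by blast
  then show ?thesis
    using outer_limit_0_S_tau_margin_le[OF assms(1), of "\<lambda>_. u" "\<lambda>_ _. u" 0] assms(2)
    by (simp add: OB_def)
qed

theorem mainTheorem1:
  assumes "CARD('k::finite) \<ge> 2"
  shows "outer_limit_0 (S_tau :: real \<Rightarrow> (('k \<Rightarrow> real ^ 'd) \<times> ('k \<Rightarrow> 'n::finite \<Rightarrow> real ^ 'd)) set)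
           \<subseteq> HardMax_argmin"
proof (clarify)
  fix W :: "'k \<Rightarrow> real ^ 'd" and H :: "'k \<Rightarrow> 'n \<Rightarrow> real ^ 'd"
  assume lim: "(W, H) \<in> outer_limit_0 S_tau"
  have "HardMax W H \<le> HardMax W' H'" if feasible: "W' \<in> OB" "\<forall>k. H' k \<in> OB"
    for W' :: "'k \<Rightarrow> real ^ 'd" and H' :: "'k \<Rightarrow> 'n \<Rightarrow> real ^ 'd"
  proof -
    have "(W k' - W k) \<bullet> H k i \<le> HardMax W' H'" if "k' \<noteq> k" for k i k'
    proof (cases "HardMax W' H' \<le> 0")
      case True
      then show ?thesis
        by (rule outer_limit_0_S_tau_margin_le[OF lim feasible _ _ that])
          (simp add: margin_le_HardMax)
    next
      case False
      then show ?thesis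
        using outer_limit_0_S_tau_margin_nonpos[OF lim that, of i] by linarith
    qed
    then show ?thesis
      unfolding HardMax_le_iff[OF assms] by blast
  qed
  then show "(W, H) \<in> HardMax_argmin"
    using outer_limit_0_S_tau_feasible lim unfolding HardMax_argmin_def by blast
qed

end
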